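(* Let $K \ge 1$ be an integer, let $x$ be a sample point, and let $\hat{\pi}(x) = (\hat{\pi}_1(x), \dots, \hat{\pi}_K(x))$ be a probability vector on the classes $[K] = \{1,\dots,K\}$. Let $\hat{\pi}_{(1)}(x) \ge \hat{\pi}_{(2)}(x) \ge \cdots \ge \hat{\pi}_{(K)}(x)$ be its entries sorted in decreasing order, and for $i \in [K]$ let $V(\hat{\pi}(x), i) = \sum_{j=1}^{i} \hat{\pi}_{(j)}(x)$. Define the average non-conformity score $$\bar{V}(\hat{\pi}(x)) = \frac{1}{K}\sum_{i=1}^K V(\hat{\pi}(x), i)$$ and the entropy $H(\hat{\pi}(x)) = -\sum_{k=1}^K \hat{\pi}_k(x)\log \hat{\pi}_k(x)$ (with $0\log 0 = 0$). Then $$\bar{V}(\hat{\pi}(x)) \le \min\big(C_K + 1 - H(\hat{\pi}(x)),\; 1 + H(\hat{\pi}(x))\big),$$ where $C_K = \log\Big(\sum_{k=1}^K \exp\big(-\tfrac{k-1}{K}\big)\Big)$.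
   Context: $V(\hat{\pi}(x), i)$ is the Adaptive Prediction Sets (APS) non-conformity score associated with the $i$-th ranked class: the cumulative sum of the sorted predicted probabilities from the most likely class down to the class of rank $i$. *)

theory Defs
  imports Complex_Main
begin

text \<open>A probability vector on classes 1..K is modelled as p :: nat => real,
  only its values on {1..K} matter.\<close>

definition sorted_desc :: "nat \<Rightarrow> (nat \<Rightarrow> real) \<Rightarrow> real list" where
  "sorted_desc K p = rev (sort (map p [1..<K+1]))"

definition aps_score :: "nat \<Rightarrow> (nat \<Rightarrow> real) \<Rightarrow> nat \<Rightarrow> real" where
  "aps_score K p i = sum_list (take i (sorted_desc K p))"

definition avg_score :: "nat \<Rightarrow> (nat \<Rightarrow> real) \<Rightarrow> real" where
  "avg_score K p = (1 / real K) * (\<Sum>i=1..K. aps_score K p i)"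

definition entropy :: "nat \<Rightarrow> (nat \<Rightarrow> real) \<Rightarrow> real" where
  "entropy K p = - (\<Sum>k=1..K. (if p k = 0 then 0 else p k * ln (p k)))"

definition C_const :: "nat \<Rightarrow> real" where
  "C_const K = ln (\<Sum>k=1..K. exp (- (real k - 1) / real K))"

end

theory Submission
  imports Defs "HOL-Library.Multiset"
begin

text \<open>Writing q for the sorted probability vector, exchanging the two sums gives
  avg_score = 1 - \<Sum>j<K. q_j * j/K. Since the entropy is nonnegative, this is at most 1 + H.
  On the other hand, Gibbs' inequality against the Boltzmann weights exp(-j/K)/Z with
  ln Z = C_K says H - \<Sum>j<K. q_j * j/K \<le> C_K, which is the other bound.\<close>

definition xlnx :: "real \<Rightarrow> real" where
  "xlnx x = (if x = 0 then 0 else x * ln x)"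

lemma entropy_eq_xlnx: "entropy K p = - (\<Sum>k=1..K. xlnx (p k))"
  by (simp add: entropy_def xlnx_def)

lemma xlnx_nonpos:
  assumes "0 \<le> x" "x \<le> 1"
  shows "xlnx x \<le> 0"
  using assms by (auto simp: xlnx_def mult_nonneg_nonpos)

lemma xlnx_ge_tangent:
  assumes "0 \<le> q" "0 < w"
  shows "q * ln w - xlnx q \<le> w - q"
proof (cases "q = 0")
  case True
  then show ?thesis using assms by (simp add: xlnx_def)
next
  case False
  with assms have "q > 0" by simp
  have "ln (w / q) \<le> w / q - 1"
    using \<open>q > 0\<close> \<open>w > 0\<close> by (intro ln_le_minus_one) simp
  then have "q * ln (w / q) \<le> q * (w / q - 1)"
    using \<open>q > 0\<close> by (intro mult_left_mono) auto
  then show ?thesis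
    using \<open>q > 0\<close> \<open>w > 0\<close> by (simp add: xlnx_def ln_div algebra_simps)
qed

lemma gibbs_inequality:
  assumes "finite A" "\<And>j. j \<in> A \<Longrightarrow> 0 \<le> q j" "(\<Sum>j\<in>A. q j) = 1"
  shows "- (\<Sum>j\<in>A. xlnx (q j)) - (\<Sum>j\<in>A. q j * a j) \<le> ln (\<Sum>j\<in>A. exp (- a j))"
proof -
  define Z where "Z = (\<Sum>j\<in>A. exp (- a j))"
  have "A \<noteq> {}" using assms(3) by auto
  then have "Z > 0"
    unfolding Z_def using assms(1) by (intro sum_pos) auto
  define w where "w j = exp (- a j) / Z" for j
  have ln_w: "ln (w j) = - a j - ln Z" for j
    using \<open>Z > 0\<close> by (simp add: w_def ln_div)
  have cross: "(\<Sum>j\<in>A. q j * ln (w j)) = - (\<Sum>j\<in>A. q j * a j) - ln Z"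
    using assms(3) by (simp add: ln_w algebra_simps sum_subtractf sum_negf flip: sum_distrib_left)
  have "(\<Sum>j\<in>A. q j * ln (w j) - xlnx (q j)) \<le> (\<Sum>j\<in>A. w j - q j)"
    using assms(2) \<open>Z > 0\<close> by (intro sum_mono xlnx_ge_tangent) (auto simp: w_def)
  also have "\<dots> = 0"
    using \<open>Z > 0\<close> assms(3)
    by (simp add: sum_subtractf w_def Z_def flip: sum_divide_distrib)
  finally show ?thesis
    by (simp add: sum_subtractf cross Z_def)
qed

lemma entropy_nonneg:
  assumes "\<And>k. k \<in> {1..K} \<Longrightarrow> 0 \<le> p k" "(\<Sum>k=1..K. p k) = 1"
  shows "0 \<le> entropy K p"
proof -
  have "p k \<le> 1" if "k \<in> {1..K}" for k
    using member_le_sum[of k "{1..K}" p] that assms by auto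
  then have "0 \<le> (\<Sum>k=1..K. - xlnx (p k))"
    using assms(1) by (intro sum_nonneg) (simp add: xlnx_nonpos)
  then show ?thesis
    by (simp add: entropy_eq_xlnx sum_negf)
qed

lemma sum_prefix_sums:
  fixes q :: "nat \<Rightarrow> 'a :: comm_ring_1"
  shows "(\<Sum>i=1..n. \<Sum>j<i. q j) = (\<Sum>j<n. (of_nat n - of_nat j) * q j)"
proof (induction n)
  case 0
  then show ?case by simp
next
  case (Suc n)
  have "(\<Sum>i=1..Suc n. \<Sum>j<i. q j) = (\<Sum>j<n. (of_nat n - of_nat j) * q j + q j) + q n"
    using Suc by (simp add: sum.distrib)
  then show ?case
    by (simp add: algebra_simps)
qed

lemma mset_sorted_desc: "mset (sorted_desc K p) = mset (map p [1..<K+1])"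
  by (simp add: sorted_desc_def)

lemma length_sorted_desc [simp]: "length (sorted_desc K p) = K"
  using arg_cong[OF mset_sorted_desc, of size] by simp

lemma set_sorted_desc: "set (sorted_desc K p) = p ` {1..K}"
  using arg_cong[OF mset_sorted_desc, of set_mset] by (auto simp: atLeastLessThanSuc_atLeastAtMost)

lemma sum_sorted_desc:
  "(\<Sum>j<K. f (sorted_desc K p ! j)) = (\<Sum>k=1..K. f (p k))"
proof -
  have "(\<Sum>j<K. f (sorted_desc K p ! j)) = sum_list (map f (sorted_desc K p))"
    by (simp add: sum_list_sum_nth atLeast0LessThan)
  also have "\<dots> = sum_list (map f (map p [1..<K+1]))"
    by (metis mset_map mset_sorted_desc sum_mset_sum_list)
  also have "\<dots> = (\<Sum>k\<in>{1..<K+1}. f (p k))"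
    by (simp add: sum_set_upt_conv_sum_list_nat[symmetric] comp_def)
  also have "\<dots> = (\<Sum>k=1..K. f (p k))"
    by (simp add: atLeastLessThanSuc_atLeastAtMost)
  finally show ?thesis .
qed

lemma aps_score_eq_sum:
  assumes "i \<le> K"
  shows "aps_score K p i = (\<Sum>j<i. sorted_desc K p ! j)"
  using assms by (simp add: aps_score_def sum_list_sum_nth atLeast0LessThan min_def)

lemma avg_score_eq:
  assumes "K \<ge> 1" "(\<Sum>k=1..K. p k) = 1"
  shows "avg_score K p = 1 - (\<Sum>j<K. sorted_desc K p ! j * (real j / real K))"
proof -
  let ?q = "\<lambda>j. sorted_desc K p ! j"
  have "(\<Sum>i=1..K. aps_score K p i) = (\<Sum>i=1..K. \<Sum>j<i. ?q j)"
    by (intro sum.cong) (simp_all add: aps_score_eq_sum)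
  then have "avg_score K p = (1 / real K) * (\<Sum>j<K. (real K - real j) * ?q j)"
    by (simp only: avg_score_def sum_prefix_sums)
  also have "\<dots> = (\<Sum>j<K. ?q j) - (\<Sum>j<K. ?q j * (real j / real K))"
    using assms(1) by (simp add: sum_distrib_left field_simps flip: sum_subtractf)
  finally show ?thesis
    using sum_sorted_desc[of "\<lambda>x. x"] assms(2) by simp
qed

lemma C_const_eq: "C_const K = ln (\<Sum>j<K. exp (- (real j / real K)))"
  unfolding C_const_def by (simp add: sum.atLeast1_atMost_eq)

theorem proposition1:
  fixes K :: nat and p :: "nat \<Rightarrow> real"
  assumes "K \<ge> 1"
    and "\<And>k. k \<in> {1..K} \<Longrightarrow> p k \<ge> 0"
    and "(\<Sum>k=1..K. p k) = 1"
  shows "avg_score K p \<le> min (C_const K + 1 - entropy K p) (1 + entropy K p)"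
proof -
  let ?q = "\<lambda>j. sorted_desc K p ! j"
  have q_nonneg: "0 \<le> ?q j" if "j \<in> {..<K}" for j
    using that nth_mem[of j "sorted_desc K p"] assms(2) by (auto simp: set_sorted_desc)
  have q_sum: "(\<Sum>j<K. ?q j) = 1"
    using sum_sorted_desc[of "\<lambda>x. x"] assms(3) by simp
  have entropy_q: "entropy K p = - (\<Sum>j<K. xlnx (?q j))"
    by (simp add: entropy_eq_xlnx sum_sorted_desc)
  have "0 \<le> (\<Sum>j<K. ?q j * (real j / real K))"
    using q_nonneg by (intro sum_nonneg) auto
  then have "avg_score K p \<le> 1 + entropy K p"
    using avg_score_eq[OF assms(1,3)] entropy_nonneg[OF assms(2,3)] by simp
  moreover have "avg_score K p \<le> C_const K + 1 - entropy K p"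
    using gibbs_inequality[OF _ q_nonneg q_sum, of "\<lambda>j. real j / real K"]
      avg_score_eq[OF assms(1,3)] entropy_q C_const_eq by simp
  ultimately show ?thesis by simp
qed

end
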